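(* Let $(X,r)$ be a square-free non-degenerate symmetric set (of arbitrary cardinality, with $S(X,r)$ embedded in $G(X,r)$) which is not the trivial solution, and suppose its associated symmetric group $(G,r_G)$ satisfies lri. Then (1) for each orbit $X_i$ of the left action of $G$ on $X$, the induced solution on $X_i$ is the trivial solution or a one-element solution; and (2) $\mathrm{mpl}(X,r)=\mathrm{mpl}(G,r_G)=2$.
   Context: A symmetric set is $(X,r)$, $r(x,y)=({}^xy,x^y)$ a non-degenerate, involutive bijection of $X\times X$ with $r^{12}r^{23}r^{12}=r^{23}r^{12}r^{23}$; square-free if $r(x,x)=(x,x)$; trivial if $r(x,y)=(y,x)$. $S(X,r)$, $G(X,r)$: monoid, group generated by $X$ with relations $xy=zt$ whenever $r(x,y)=(z,t)\ne(x,y)$. A symmetric group is $(G,\sigma)$, $\sigma(u,v)=({}^uv,u^v)$ involutive with ${}^a1=1,{}^1u=u,1^u=1,a^1=a$, ${}^{ab}u={}^a({}^bu)$, $a^{uv}=(a^u)^v$, ${}^a(uv)=({}^au)({}^{a^u}v)$, $(ab)^u=(a^{{}^bu})(b^u)$, $uv=({}^uv)(u^v)$; $(G,r_G)$ is $G(X,r)$ with the unique such braiding extending $r$. lri on $(G,r_G)$: $({}^ab)^a=b={}^a(b^a)$ for all $a,b\in G$. Retraction: $x\sim y$ iff ${}^xz={}^yz$ for all $z$, with induced map; $\mathrm{mpl}=m$ iff $m$ minimal with the $m$-fold retraction a one-element set. *)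

theory Defs
  imports "HOL-Algebra.Group"
begin

section \<open>Symmetric sets (X,r); X is the whole type 'a (arbitrary cardinality)\<close>

definition lact :: "('a \<times> 'a \<Rightarrow> 'a \<times> 'a) \<Rightarrow> 'a \<Rightarrow> 'a \<Rightarrow> 'a" where
  "lact r x y = fst (r (x, y))"

definition ract :: "('a \<times> 'a \<Rightarrow> 'a \<times> 'a) \<Rightarrow> 'a \<Rightarrow> 'a \<Rightarrow> 'a" where
  "ract r x y = snd (r (x, y))"

definition r12 :: "('a \<times> 'a \<Rightarrow> 'a \<times> 'a) \<Rightarrow> 'a \<times> 'a \<times> 'a \<Rightarrow> 'a \<times> 'a \<times> 'a" where
  "r12 r t = (case t of (x, y, z) \<Rightarrow> (case r (x, y) of (a, b) \<Rightarrow> (a, b, z)))"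

definition r23 :: "('a \<times> 'a \<Rightarrow> 'a \<times> 'a) \<Rightarrow> 'a \<times> 'a \<times> 'a \<Rightarrow> 'a \<times> 'a \<times> 'a" where
  "r23 r t = (case t of (x, y, z) \<Rightarrow> (case r (y, z) of (b, c) \<Rightarrow> (x, b, c)))"

definition symmetric_set :: "('a \<times> 'a \<Rightarrow> 'a \<times> 'a) \<Rightarrow> bool" where
  "symmetric_set r \<longleftrightarrow>
     bij r \<and> (\<forall>p. r (r p) = p)
     \<and> (\<forall>x. bij (lact r x)) \<and> (\<forall>y. bij (\<lambda>x. ract r x y))
     \<and> r12 r \<circ> r23 r \<circ> r12 r = r23 r \<circ> r12 r \<circ> r23 r"

definition square_free :: "('a \<times> 'a \<Rightarrow> 'a \<times> 'a) \<Rightarrow> bool" where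
  "square_free r \<longleftrightarrow> (\<forall>x. r (x, x) = (x, x))"

definition trivial_sol :: "('a \<times> 'a \<Rightarrow> 'a \<times> 'a) \<Rightarrow> bool" where
  "trivial_sol r \<longleftrightarrow> (\<forall>x y. r (x, y) = (y, x))"

type_synonym 'a word = "('a \<times> bool) list"   (* (x,True) = x, (x,False) = x^-1 *)

inductive eqvG :: "('a \<times> 'a \<Rightarrow> 'a \<times> 'a) \<Rightarrow> 'a word \<Rightarrow> 'a word \<Rightarrow> bool" for r where
  refl: "eqvG r w w"
| sym: "eqvG r u v \<Longrightarrow> eqvG r v u"
| trans: "eqvG r u v \<Longrightarrow> eqvG r v w \<Longrightarrow> eqvG r u w"
| cancel: "eqvG r (u @ [(x, b), (x, \<not> b)] @ v) (u @ v)"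
| rel: "r (x, y) = (z, t) \<Longrightarrow> (z, t) \<noteq> (x, y) \<Longrightarrow>
        eqvG r (u @ [(x, True), (y, True)] @ v) (u @ [(z, True), (t, True)] @ v)"

definition wclass :: "('a \<times> 'a \<Rightarrow> 'a \<times> 'a) \<Rightarrow> 'a word \<Rightarrow> 'a word set" where
  "wclass r w = {v. eqvG r w v}"

definition GX :: "('a \<times> 'a \<Rightarrow> 'a \<times> 'a) \<Rightarrow> 'a word set monoid" where
  "GX r = \<lparr> carrier = range (wclass r),
            mult = (\<lambda>A B. wclass r ((SOME a. a \<in> A) @ (SOME b. b \<in> B))),
            one = wclass r [] \<rparr>"

definition iota :: "('a \<times> 'a \<Rightarrow> 'a \<times> 'a) \<Rightarrow> 'a \<Rightarrow> 'a word set" where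
  "iota r x = wclass r [(x, True)]"

inductive eqvS :: "('a \<times> 'a \<Rightarrow> 'a \<times> 'a) \<Rightarrow> 'a list \<Rightarrow> 'a list \<Rightarrow> bool" for r where
  refl: "eqvS r w w"
| sym: "eqvS r u v \<Longrightarrow> eqvS r v u"
| trans: "eqvS r u v \<Longrightarrow> eqvS r v w \<Longrightarrow> eqvS r u w"
| rel: "r (x, y) = (z, t) \<Longrightarrow> (z, t) \<noteq> (x, y) \<Longrightarrow>
        eqvS r (u @ [x, y] @ v) (u @ [z, t] @ v)"

definition S_embeds :: "('a \<times> 'a \<Rightarrow> 'a \<times> 'a) \<Rightarrow> bool" where
  "S_embeds r \<longleftrightarrow> (\<forall>u v. eqvG r (map (\<lambda>x. (x, True)) u) (map (\<lambda>x. (x, True)) v) \<longrightarrow> eqvS r u v)"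

definition symmetric_group :: "('g, 'b) monoid_scheme \<Rightarrow> ('g \<times> 'g \<Rightarrow> 'g \<times> 'g) \<Rightarrow> bool" where
  "symmetric_group G \<sigma> \<longleftrightarrow> group G \<and>
    (let L = (\<lambda>a u. fst (\<sigma> (a, u))); R = (\<lambda>a u. snd (\<sigma> (a, u))) in
     (\<forall>u\<in>carrier G. \<forall>v\<in>carrier G. L u v \<in> carrier G \<and> R u v \<in> carrier G \<and> \<sigma> (\<sigma> (u, v)) = (u, v))
     \<and> (\<forall>a\<in>carrier G. L a \<one>\<^bsub>G\<^esub> = \<one>\<^bsub>G\<^esub> \<and> L \<one>\<^bsub>G\<^esub> a = a \<and> R \<one>\<^bsub>G\<^esub> a = \<one>\<^bsub>G\<^esub> \<and> R a \<one>\<^bsub>G\<^esub> = a)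
     \<and> (\<forall>a\<in>carrier G. \<forall>b\<in>carrier G. \<forall>u\<in>carrier G. \<forall>v\<in>carrier G.
          L (a \<otimes>\<^bsub>G\<^esub> b) u = L a (L b u)
        \<and> R a (u \<otimes>\<^bsub>G\<^esub> v) = R (R a u) v
        \<and> L a (u \<otimes>\<^bsub>G\<^esub> v) = L a u \<otimes>\<^bsub>G\<^esub> L (R a u) v
        \<and> R (a \<otimes>\<^bsub>G\<^esub> b) u = R a (L b u) \<otimes>\<^bsub>G\<^esub> R b u
        \<and> u \<otimes>\<^bsub>G\<^esub> v = L u v \<otimes>\<^bsub>G\<^esub> R u v))"

definition lri :: "('g, 'b) monoid_scheme \<Rightarrow> ('g \<times> 'g \<Rightarrow> 'g \<times> 'g) \<Rightarrow> bool" where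
  "lri G \<sigma> \<longleftrightarrow> (\<forall>a\<in>carrier G. \<forall>b\<in>carrier G.
      snd (\<sigma> (fst (\<sigma> (a, b)), a)) = b \<and> fst (\<sigma> (a, snd (\<sigma> (b, a)))) = b)"

text \<open>The m-fold retraction of a solution on carrier A with left action L is represented
  as the quotient of A by the relation ret_rel A L m: the 0-fold retraction is A itself,
  and two elements become identified in the (m+1)-fold retraction iff their classes in the
  m-fold retraction have the same left action on all classes.\<close>

fun ret_rel :: "'b set \<Rightarrow> ('b \<Rightarrow> 'b \<Rightarrow> 'b) \<Rightarrow> nat \<Rightarrow> 'b \<Rightarrow> 'b \<Rightarrow> bool" where
  "ret_rel A L 0 x y = (x = y)"
| "ret_rel A L (Suc k) x y = (\<forall>z\<in>A. ret_rel A L k (L x z) (L y z))"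

definition ret_one_elem :: "'b set \<Rightarrow> ('b \<Rightarrow> 'b \<Rightarrow> 'b) \<Rightarrow> nat \<Rightarrow> bool" where
  "ret_one_elem A L m \<longleftrightarrow> A \<noteq> {} \<and> (\<forall>x\<in>A. \<forall>y\<in>A. ret_rel A L m x y)"

definition mpl_is :: "'b set \<Rightarrow> ('b \<Rightarrow> 'b \<Rightarrow> 'b) \<Rightarrow> nat \<Rightarrow> bool" where
  "mpl_is A L m \<longleftrightarrow> ret_one_elem A L m \<and> (\<forall>k<m. \<not> ret_one_elem A L k)"

definition G_orbit :: "('a \<times> 'a \<Rightarrow> 'a \<times> 'a) \<Rightarrow> ('a word set \<times> 'a word set \<Rightarrow> 'a word set \<times> 'a word set)
                       \<Rightarrow> 'a \<Rightarrow> 'a set" where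
  "G_orbit r \<sigma> x = {y. \<exists>a\<in>carrier (GX r). fst (\<sigma> (a, iota r x)) = iota r y}"

end

theory Submission
  imports Defs
begin

text \<open>Write \<open>L a u = \<^sup>au\<close> and \<open>R a u = a\<^sup>u\<close> for the braiding of G.
  Under lri the right action is determined by the left one, \<open>R u c = L (c\<inverse>) u\<close>, and the
  matched-pair axioms turn \<open>L (L b u) c \<cdot> b\<close> into \<open>L u c \<cdot> L (R u c) (R b u)\<close>.
  For a square-free generator \<open>u = c\<close> this gives \<open>L (L b u) u = u\<close>, so every G-orbit in X
  carries the trivial solution. For generators \<open>b, u, c\<close> the same identity is a relation
  between two words of length two; as S(X,r) embeds in G, either it already says
  \<open>L (L b u) c = L u c\<close>, or its two sides differ by r, and then orbit triviality forces the
  same equation. Hence the second retraction of X is a point. Induction over words lifts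
  \<open>L (L a c) = L c\<close> from the generators to all of G, and since r is not trivial, level one
  fails on both X and G.\<close>

section \<open>Words, the group G(X,r) and the monoid S(X,r)\<close>

lemma eqvG_append_cong: "eqvG r u v \<Longrightarrow> eqvG r (p @ u @ q) (p @ v @ q)"
proof (induction rule: eqvG.induct)
  case (refl w)
  then show ?case by (rule eqvG.refl)
next
  case (sym u v)
  then show ?case by (blast intro: eqvG.sym)
next
  case (trans u v w)
  then show ?case by (blast intro: eqvG.trans)
next
  case (cancel u x b v)
  then show ?case using eqvG.cancel[of r "p @ u" x b "v @ q"] by simp
next
  case (rel x y z t u v)
  then show ?case using eqvG.rel[of r x y z t "p @ u" "v @ q"] by simp
qed

lemma wclass_eq_iff: "wclass r u = wclass r v \<longleftrightarrow> eqvG r u v"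
proof
  assume "wclass r u = wclass r v"
  then have "v \<in> wclass r u" by (simp add: wclass_def eqvG.refl)
  then show "eqvG r u v" by (simp add: wclass_def)
next
  assume "eqvG r u v"
  then show "wclass r u = wclass r v"
    unfolding wclass_def by (auto intro: eqvG.trans eqvG.sym)
qed

lemma wclass_in_GX [simp]: "wclass r w \<in> carrier (GX r)"
  by (simp add: GX_def)

lemma iota_in_GX [simp]: "iota r x \<in> carrier (GX r)"
  by (simp add: iota_def)

lemma GX_one: "\<one>\<^bsub>GX r\<^esub> = wclass r []"
  by (simp add: GX_def)

lemma GX_mult_wclass: "wclass r u \<otimes>\<^bsub>GX r\<^esub> wclass r v = wclass r (u @ v)"
proof -
  define a where "a = (SOME a. a \<in> wclass r u)"
  define b where "b = (SOME b. b \<in> wclass r v)"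
  have "eqvG r u a" "eqvG r v b"
    using someI[of "\<lambda>a. a \<in> wclass r u" u] someI[of "\<lambda>b. b \<in> wclass r v" v]
    by (simp_all add: a_def b_def wclass_def eqvG.refl)
  then have "eqvG r (a @ b) (u @ b)" "eqvG r (u @ b) (u @ v)"
    using eqvG_append_cong[of r _ _ "[]"] eqvG_append_cong[of r _ _ u "[]"]
    by (simp_all add: eqvG.sym)
  then have "wclass r (a @ b) = wclass r (u @ v)"
    by (simp add: wclass_eq_iff eqvG.trans)
  then show ?thesis by (simp add: GX_def a_def b_def)
qed

lemma GX_inv_iota:
  assumes "group (GX r)"
  shows "inv\<^bsub>GX r\<^esub> iota r x = wclass r [(x, False)]"
proof -
  have "wclass r [(x, False)] \<otimes>\<^bsub>GX r\<^esub> iota r x = \<one>\<^bsub>GX r\<^esub>"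
    unfolding iota_def GX_one GX_mult_wclass wclass_eq_iff
    using eqvG.cancel[of r "[]" x False "[]"] by simp
  then show ?thesis using group.inv_equality[OF assms] by simp
qed

lemma GX_induct [consumes 2, case_names one iota inv_iota mult]:
  assumes "group (GX r)" and "g \<in> carrier (GX r)"
    and "Q \<one>\<^bsub>GX r\<^esub>"
    and "\<And>x. Q (iota r x)"
    and "\<And>x. Q (inv\<^bsub>GX r\<^esub> iota r x)"
    and "\<And>a b. a \<in> carrier (GX r) \<Longrightarrow> b \<in> carrier (GX r) \<Longrightarrow> Q a \<Longrightarrow> Q b
                \<Longrightarrow> Q (a \<otimes>\<^bsub>GX r\<^esub> b)"
  shows "Q g"
proof -
  have "Q (wclass r w)" for w
  proof (induction w)
    case Nil
    then show ?case using assms(3) by (simp add: GX_one)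
  next
    case (Cons p w)
    obtain x b where p: "p = (x, b)" by (cases p)
    have "Q (wclass r [p])"
      using assms(4,5) GX_inv_iota[OF assms(1)] p by (cases b) (auto simp: iota_def)
    then show ?case
      using assms(6)[of "wclass r [p]" "wclass r w"] Cons.IH GX_mult_wclass[of r "[p]" w] by simp
  qed
  moreover obtain w where "g = wclass r w" using assms(2) by (auto simp: GX_def)
  ultimately show ?thesis by simp
qed

lemma GX_subgroup_induct [consumes 2, case_names one iota inv mult]:
  assumes "group (GX r)" and "g \<in> carrier (GX r)"
    and "Q \<one>\<^bsub>GX r\<^esub>"
    and "\<And>x. Q (iota r x)"
    and "\<And>a. a \<in> carrier (GX r) \<Longrightarrow> Q a \<Longrightarrow> Q (inv\<^bsub>GX r\<^esub> a)"
    and "\<And>a b. a \<in> carrier (GX r) \<Longrightarrow> b \<in> carrier (GX r) \<Longrightarrow> Q a \<Longrightarrow> Q b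
                \<Longrightarrow> Q (a \<otimes>\<^bsub>GX r\<^esub> b)"
  shows "Q g"
  using assms(1,2) by (induction rule: GX_induct) (use assms in auto)

text \<open>On words of length two the defining relations only exchange a pair with its image
  under the involution r, so the orbit of the pair is an invariant.\<close>

fun pair_orbit :: "('a \<times> 'a \<Rightarrow> 'a \<times> 'a) \<Rightarrow> 'a list \<Rightarrow> ('a \<times> 'a) set" where
  "pair_orbit r [x, y] = {(x, y), r (x, y)}"
| "pair_orbit r _ = {}"

lemma pair_orbit_length: "length w \<noteq> 2 \<Longrightarrow> pair_orbit r w = {}"
  by (cases "(r, w)" rule: pair_orbit.cases) auto

lemma eqvS_invariants:
  assumes "\<forall>p. r (r p) = p" and "eqvS r u v"
  shows "length u = length v \<and> pair_orbit r u = pair_orbit r v \<and> (length u \<le> 1 \<longrightarrow> u = v)"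
  using assms(2)
proof (induction rule: eqvS.induct)
  case (rel x y z t u v)
  show ?case
  proof (cases "u = [] \<and> v = []")
    case True
    have "r (z, t) = (x, y)" using rel(1) assms(1) by metis
    then show ?thesis using True rel(1) by (simp add: insert_commute)
  next
    case False
    then show ?thesis by (simp add: pair_orbit_length)
  qed
qed metis+

lemma iota_inj:
  assumes "\<forall>p. r (r p) = p" and "S_embeds r" and "iota r x = iota r y"
  shows "x = y"
proof -
  have "eqvG r (map (\<lambda>x. (x, True)) [x]) (map (\<lambda>x. (x, True)) [y])"
    using assms(3) by (simp add: iota_def wclass_eq_iff)
  then have "eqvS r [x] [y]" using assms(2) unfolding S_embeds_def by blast
  then show ?thesis using eqvS_invariants[OF assms(1)] by fastforce
qed

lemma iota_mult_eq:
  assumes "\<forall>p. r (r p) = p" and "S_embeds r"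
    and "iota r x \<otimes>\<^bsub>GX r\<^esub> iota r y = iota r z \<otimes>\<^bsub>GX r\<^esub> iota r t"
  shows "(z, t) = (x, y) \<or> (z, t) = r (x, y)"
proof -
  have "eqvG r (map (\<lambda>x. (x, True)) [x, y]) (map (\<lambda>x. (x, True)) [z, t])"
    using assms(3) by (simp add: iota_def GX_mult_wclass wclass_eq_iff)
  then have "eqvS r [x, y] [z, t]" using assms(2) unfolding S_embeds_def by blast
  then have "pair_orbit r [x, y] = pair_orbit r [z, t]" using eqvS_invariants[OF assms(1)] by blast
  then show ?thesis by (metis insertE insertI1 pair_orbit.simps(1) singletonD)
qed

section \<open>Symmetric groups satisfying lri\<close>

locale lri_symmetric_group =
  fixes G (structure) and \<sigma>
  assumes symmetric_group: "symmetric_group G \<sigma>" and lri: "lri G \<sigma>"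

sublocale lri_symmetric_group \<subseteq> group G
  using symmetric_group unfolding symmetric_group_def by simp

context lri_symmetric_group
begin

definition L where "L a u = fst (\<sigma> (a, u))"
definition R where "R a u = snd (\<sigma> (a, u))"

lemma L_closed [simp]: "a \<in> carrier G \<Longrightarrow> u \<in> carrier G \<Longrightarrow> L a u \<in> carrier G"
  and R_closed [simp]: "a \<in> carrier G \<Longrightarrow> u \<in> carrier G \<Longrightarrow> R a u \<in> carrier G"
  and L_one_right [simp]: "a \<in> carrier G \<Longrightarrow> L a \<one> = \<one>"
  and L_one_left [simp]: "u \<in> carrier G \<Longrightarrow> L \<one> u = u"
  using symmetric_group unfolding symmetric_group_def Let_def L_def R_def by blast+

lemma L_mult:
  "a \<in> carrier G \<Longrightarrow> b \<in> carrier G \<Longrightarrow> u \<in> carrier G \<Longrightarrow> L (a \<otimes> b) u = L a (L b u)"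
  and L_mult_right:
  "a \<in> carrier G \<Longrightarrow> u \<in> carrier G \<Longrightarrow> v \<in> carrier G \<Longrightarrow> L a (u \<otimes> v) = L a u \<otimes> L (R a u) v"
  and R_mult_left:
  "a \<in> carrier G \<Longrightarrow> b \<in> carrier G \<Longrightarrow> u \<in> carrier G \<Longrightarrow> R (a \<otimes> b) u = R a (L b u) \<otimes> R b u"
  using symmetric_group unfolding symmetric_group_def Let_def L_def R_def by blast+

lemma R_L_cancel: "a \<in> carrier G \<Longrightarrow> b \<in> carrier G \<Longrightarrow> R (L a b) a = b"
  and L_R_cancel: "a \<in> carrier G \<Longrightarrow> b \<in> carrier G \<Longrightarrow> L a (R b a) = b"
  using lri unfolding lri_def L_def R_def by blast+

lemma L_inv_L [simp]: "a \<in> carrier G \<Longrightarrow> b \<in> carrier G \<Longrightarrow> L (inv a) (L a b) = b"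
  using L_mult[of "inv a" a b] by simp

lemma L_L_inv [simp]: "a \<in> carrier G \<Longrightarrow> b \<in> carrier G \<Longrightarrow> L a (L (inv a) b) = b"
  using L_mult[of a "inv a" b] by simp

lemma R_eq_L_inv: "u \<in> carrier G \<Longrightarrow> c \<in> carrier G \<Longrightarrow> R u c = L (inv c) u"
  using R_L_cancel[of c "L (inv c) u"] by simp

lemma L_L_mult_eq:
  assumes "b \<in> carrier G" "u \<in> carrier G" "c \<in> carrier G"
  shows "L (L b u) c \<otimes> b = L u c \<otimes> L (R u c) (R b u)"
proof -
  define a where "a = L (L b u) c"
  have a: "a \<in> carrier G" using assms by (simp add: a_def)
  have "R (a \<otimes> b) u = c \<otimes> R b u"
    using R_mult_left[OF a assms(1,2)] R_L_cancel[of "L b u" c] assms by (simp add: a_def)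
  then have "a \<otimes> b = L u (c \<otimes> R b u)"
    using L_R_cancel[of u "a \<otimes> b"] a assms by simp
  then show ?thesis using L_mult_right assms by (simp add: a_def)
qed

lemma L_L_self:
  assumes "b \<in> carrier G" "u \<in> carrier G" and "L u u = u" "R u u = u"
  shows "L (L b u) u = u"
proof -
  have "L (L b u) u \<otimes> b = u \<otimes> b"
    using L_L_mult_eq[of b u u] L_R_cancel[of u b] assms by simp
  then show ?thesis using assms(1,2) by simp
qed

lemma L_inv_right:
  assumes "a \<in> carrier G" "v \<in> carrier G"
  shows "L a (inv v) = inv (L (L v a) v)"
proof -
  have "L (L v a) v \<otimes> L a (inv v) = \<one>"
    using L_mult_right[of "L v a" v "inv v"] R_L_cancel[of v a] assms by simp
  then have "L a (inv v) \<otimes> L (L v a) v = \<one>"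
    using assms by (simp add: inv_comm)
  then show ?thesis using assms by (simp add: inv_equality)
qed

end

lemma mpl_is_2I:
  assumes "\<forall>x\<in>A. \<forall>z\<in>A. \<forall>w\<in>A. L (L x z) w = L z w"
    and "x \<in> A" "y \<in> A" "z \<in> A" "L x z \<noteq> L y z"
  shows "mpl_is A L 2"
proof -
  have "\<not> ret_one_elem A L 1"
    using assms(2-5) unfolding ret_one_elem_def by (metis One_nat_def ret_rel.simps)
  moreover have "\<not> ret_one_elem A L 0"
  proof
    assume "ret_one_elem A L 0"
    then have "x = y" using assms(2,3) by (simp add: ret_one_elem_def)
    then show False using assms(5) by simp
  qed
  ultimately have "\<not> ret_one_elem A L k" if "k < 2" for k
    using that by (cases k) (simp_all add: less_Suc_eq)
  moreover have "ret_one_elem A L 2"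
    using assms(1,2) by (auto simp: ret_one_elem_def numeral_2_eq_2)
  ultimately show ?thesis by (simp add: mpl_is_def)
qed

section \<open>Square-free symmetric sets whose symmetric group satisfies lri\<close>

lemma trivial_solI:
  assumes "\<forall>p. r (r p) = p" and "\<And>x y. lact r x y = y"
  shows "trivial_sol r"
  unfolding trivial_sol_def
proof (intro allI)
  fix x y
  have r: "r (x, y) = (y, ract r x y)" using assms(2) by (simp add: lact_def ract_def prod_eq_iff)
  then have "(x, y) = (ract r x y, snd (r (y, ract r x y)))"
    using assms(1) assms(2)[of y "ract r x y"] by (metis lact_def prod.collapse)
  then show "r (x, y) = (y, x)" using r by simp
qed

locale lri_square_free_symmetric_set =
  fixes r :: "'a \<times> 'a \<Rightarrow> 'a \<times> 'a"
    and \<sigma> :: "'a word set \<times> 'a word set \<Rightarrow> 'a word set \<times> 'a word set"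
  assumes symmetric_set: "symmetric_set r" and square_free: "square_free r"
    and S_embeds: "S_embeds r"
    and symmetric_group: "symmetric_group (GX r) \<sigma>"
    and \<sigma>_extends_r: "\<forall>x y. \<sigma> (iota r x, iota r y) = (iota r (lact r x y), iota r (ract r x y))"
    and lri: "lri (GX r) \<sigma>"

sublocale lri_square_free_symmetric_set \<subseteq> lri_symmetric_group "GX r" \<sigma>
  using symmetric_group lri by unfold_locales

context lri_square_free_symmetric_set
begin

lemma involutive: "r (r p) = p"
  using symmetric_set unfolding symmetric_set_def by blast

lemma lact_surj: "\<exists>z. lact r b z = x"
  using symmetric_set unfolding symmetric_set_def bij_def surj_def by metis

lemma lact_self: "lact r x x = x" and ract_self: "ract r x x = x"
  using square_free unfolding square_free_def lact_def ract_def by auto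

lemma iota_eq_iff [simp]: "iota r x = iota r y \<longleftrightarrow> x = y"
  using iota_inj[OF _ S_embeds] involutive by blast

lemma L_iota: "L (iota r x) (iota r y) = iota r (lact r x y)"
  and R_iota: "R (iota r x) (iota r y) = iota r (ract r x y)"
  using \<sigma>_extends_r by (simp_all add: L_def R_def)

lemma ract_lact: "ract r (lact r x y) x = y"
  using R_L_cancel[of "iota r x" "iota r y"] by (simp add: L_iota R_iota)

lemma L_iota_in_range:
  assumes "g \<in> carrier (GX r)"
  shows "\<exists>y. L g (iota r x) = iota r y"
  using group_axioms assms
proof (induction arbitrary: x rule: GX_induct)
  case one
  then show ?case by auto
next
  case (iota b)
  then show ?case by (auto simp: L_iota)
next
  case (inv_iota b)
  obtain z where "lact r b z = x" using lact_surj by blast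
  then have "L (inv\<^bsub>GX r\<^esub> iota r b) (iota r x) = iota r z"
    using L_inv_L[of "iota r b" "iota r z"] by (simp add: L_iota)
  then show ?case by blast
next
  case (mult a b)
  then show ?case using L_mult by (metis iota_in_GX)
qed

lemma mem_G_orbit_iff: "y \<in> G_orbit r \<sigma> x \<longleftrightarrow> (\<exists>g\<in>carrier (GX r). L g (iota r x) = iota r y)"
  by (simp add: G_orbit_def L_def)

lemma G_orbit_sym:
  assumes "y \<in> G_orbit r \<sigma> x"
  shows "x \<in> G_orbit r \<sigma> y"
proof -
  obtain g where g: "g \<in> carrier (GX r)" "L g (iota r x) = iota r y"
    using assms by (auto simp: mem_G_orbit_iff)
  then have "L (inv\<^bsub>GX r\<^esub> g) (iota r y) = iota r x"
    using L_inv_L[of g "iota r x"] by simp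
  then show ?thesis using g(1) by (auto simp: mem_G_orbit_iff)
qed

lemma G_orbit_trans:
  assumes "y \<in> G_orbit r \<sigma> x" "z \<in> G_orbit r \<sigma> y"
  shows "z \<in> G_orbit r \<sigma> x"
proof -
  obtain g h where "g \<in> carrier (GX r)" "L g (iota r x) = iota r y"
    and "h \<in> carrier (GX r)" "L h (iota r y) = iota r z"
    using assms by (auto simp: mem_G_orbit_iff)
  then have "L (h \<otimes>\<^bsub>GX r\<^esub> g) (iota r x) = iota r z"
    by (simp add: L_mult)
  then show ?thesis using \<open>g \<in> carrier (GX r)\<close> \<open>h \<in> carrier (GX r)\<close>
    by (auto simp: mem_G_orbit_iff)
qed

lemma lact_mem_G_orbit: "lact r b x \<in> G_orbit r \<sigma> x"
  unfolding mem_G_orbit_iff by (rule bexI[of _ "iota r b"]) (simp_all add: L_iota)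

lemma G_orbit_invariant:
  assumes "\<And>b x. f (lact r b x) = f x" and "y \<in> G_orbit r \<sigma> x"
  shows "f y = f x"
proof -
  obtain g where g: "g \<in> carrier (GX r)" "L g (iota r x) = iota r y"
    using assms(2) by (auto simp: mem_G_orbit_iff)
  have "\<forall>x y. L g (iota r x) = iota r y \<longrightarrow> f y = f x"
    using group_axioms g(1)
  proof (induction rule: GX_subgroup_induct)
    case (iota b)
    then show ?case using assms(1) by (simp add: L_iota)
  next
    case (inv a)
    then show ?case by (metis L_L_inv iota_in_GX)
  next
    case (mult a b)
    then show ?case by (metis L_iota_in_range L_mult iota_in_GX)
  qed simp
  then show ?thesis using g(2) by blast
qed

lemma lact_trivial_on_G_orbit:
  assumes "y \<in> G_orbit r \<sigma> x"
  shows "lact r x y = y"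
proof -
  obtain g where "g \<in> carrier (GX r)" "L g (iota r y) = iota r x"
    using G_orbit_sym[OF assms] by (auto simp: mem_G_orbit_iff)
  then have "L (iota r x) (iota r y) = iota r y"
    using L_L_self[of g "iota r y"] by (simp add: L_iota R_iota lact_self ract_self)
  then show ?thesis by (simp add: L_iota)
qed

lemma r_trivial_on_G_orbit:
  assumes "y \<in> G_orbit r \<sigma> x" "z \<in> G_orbit r \<sigma> x"
  shows "r (y, z) = (z, y)"
proof -
  have "z \<in> G_orbit r \<sigma> y" "y \<in> G_orbit r \<sigma> z"
    using assms G_orbit_sym G_orbit_trans by blast+
  then have "lact r y z = z" "ract r y z = y"
    using lact_trivial_on_G_orbit ract_lact by metis+
  then show ?thesis by (metis lact_def ract_def prod.collapse)
qed

lemma lact_lact: "lact r (lact r b u) c = lact r u c"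
proof -
  define \<alpha> where "\<alpha> = lact r (lact r b u) c"
  define \<beta> where "\<beta> = lact r (ract r u c) (ract r b u)"
  have "iota r \<alpha> \<otimes>\<^bsub>GX r\<^esub> iota r b = iota r (lact r u c) \<otimes>\<^bsub>GX r\<^esub> iota r \<beta>"
    using L_L_mult_eq[of "iota r b" "iota r u" "iota r c"]
    by (simp add: L_iota R_iota \<alpha>_def \<beta>_def)
  then have "(lact r u c, \<beta>) = (\<alpha>, b) \<or> (lact r u c, \<beta>) = r (\<alpha>, b)"
    using iota_mult_eq[OF _ S_embeds] involutive by blast
  then consider "lact r u c = \<alpha>" | "lact r \<alpha> b = lact r u c"
    by (metis fst_conv lact_def)
  then show ?thesis
  proof cases
    case 1
    then show ?thesis by (simp add: \<alpha>_def)
  next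
    case 2
    have "b \<in> G_orbit r \<sigma> c"
      using G_orbit_sym[OF lact_mem_G_orbit[of \<alpha> b]] lact_mem_G_orbit[of u c] 2
      by (auto intro: G_orbit_trans)
    then have "b \<in> G_orbit r \<sigma> \<alpha>"
      using G_orbit_sym[OF lact_mem_G_orbit[of "lact r b u" c]] \<alpha>_def G_orbit_trans by blast
    then have ucb: "lact r u c = b"
      using 2 lact_trivial_on_G_orbit by simp
    then have "r (b, u) = (lact r b u, c)"
      using ract_lact[of u c] by (simp add: lact_def ract_def prod_eq_iff)
    then have "\<alpha> = b" using involutive[of "(b, u)"] by (simp add: \<alpha>_def lact_def)
    then show ?thesis using ucb by (simp add: \<alpha>_def)
  qed
qed

lemma L_iota_G_orbit:
  assumes "d \<in> carrier (GX r)"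
  shows "y \<in> G_orbit r \<sigma> x \<Longrightarrow> L (iota r y) d = L (iota r x) d"
  using group_axioms assms
proof (induction arbitrary: x y rule: GX_subgroup_induct)
  case one
  then show ?case by simp
next
  case (iota w)
  then show ?case using G_orbit_invariant[of "\<lambda>x. lact r x w"] lact_lact by (simp add: L_iota)
next
  case (inv d)
  obtain x' y' where x': "L d (iota r x) = iota r x'" and y': "L d (iota r y) = iota r y'"
    using L_iota_in_range inv.hyps by meson
  have "y' \<in> G_orbit r \<sigma> x'"
    using inv.prems x' y' inv.hyps mem_G_orbit_iff G_orbit_sym G_orbit_trans by meson
  then show ?case using inv L_inv_right x' y' by simp
next
  case (mult a b)
  obtain x' y' where x': "R (iota r x) a = iota r x'" and y': "R (iota r y) a = iota r y'"
    using L_iota_in_range mult.hyps R_eq_L_inv by (metis inv_closed iota_in_GX)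
  have "y' \<in> G_orbit r \<sigma> x'"
    using mult.prems x' y' mult.hyps R_eq_L_inv mem_G_orbit_iff G_orbit_sym G_orbit_trans
    by (metis inv_closed iota_in_GX)
  then show ?case using mult L_mult_right x' y' by simp
qed

lemma L_L:
  assumes "a \<in> carrier (GX r)" "c \<in> carrier (GX r)" "d \<in> carrier (GX r)"
  shows "L (L a c) d = L c d"
  using group_axioms assms(2) assms(1,3)
proof (induction arbitrary: a d rule: GX_subgroup_induct)
  case one
  then show ?case by simp
next
  case (iota x)
  then obtain y where "L a (iota r x) = iota r y" using L_iota_in_range by blast
  then show ?case using L_iota_G_orbit iota mem_G_orbit_iff by metis
next
  case (inv c)
  define e where "e = L (L c a) c"
  have e: "e \<in> carrier (GX r)" and "\<And>d. d \<in> carrier (GX r) \<Longrightarrow> L e d = L c d"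
    using inv by (simp_all add: e_def)
  then have "L (inv\<^bsub>GX r\<^esub> e) d = L (inv\<^bsub>GX r\<^esub> c) d"
    using inv L_L_inv[of e d] L_inv_L[of c "L (inv\<^bsub>GX r\<^esub> e) d"] by (metis inv_closed L_closed)
  then show ?case using L_inv_right inv by (simp add: e_def)
next
  case (mult c1 c2)
  have "L (L a (c1 \<otimes>\<^bsub>GX r\<^esub> c2)) d = L (L a c1) (L (L (R a c1) c2) d)"
    using mult L_mult_right L_mult by simp
  also have "\<dots> = L (c1 \<otimes>\<^bsub>GX r\<^esub> c2) d"
    using mult L_mult by simp
  finally show ?case .
qed

end

theorem mainTheorem15:
  fixes r :: "'a \<times> 'a \<Rightarrow> 'a \<times> 'a"
    and \<sigma> :: "'a word set \<times> 'a word set \<Rightarrow> 'a word set \<times> 'a word set"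
  assumes "symmetric_set r" and "square_free r" and "\<not> trivial_sol r"
    and "S_embeds r"
    and "symmetric_group (GX r) \<sigma>"
    and "\<forall>x y. \<sigma> (iota r x, iota r y) = (iota r (lact r x y), iota r (ract r x y))"
    and "lri (GX r) \<sigma>"
  shows "(\<forall>x. (\<forall>y\<in>G_orbit r \<sigma> x. \<forall>z\<in>G_orbit r \<sigma> x. r (y, z) = (z, y))
              \<or> (\<exists>y. G_orbit r \<sigma> x = {y}))
       \<and> mpl_is UNIV (lact r) 2
       \<and> mpl_is (carrier (GX r)) (\<lambda>a b. fst (\<sigma> (a, b))) 2"
proof -
  interpret lri_square_free_symmetric_set r \<sigma>
    using assms by (simp add: lri_square_free_symmetric_set_def)
  obtain x y where xy: "lact r x y \<noteq> lact r y y"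
    using trivial_solI[of r] involutive assms(3) lact_self by metis
  have "mpl_is UNIV (lact r) 2"
    using mpl_is_2I[of UNIV "lact r"] lact_lact xy by blast
  moreover have "mpl_is (carrier (GX r)) L 2"
    using mpl_is_2I[of "carrier (GX r)" L "iota r x" "iota r y" "iota r y"] L_L xy
    by (simp add: L_iota)
  ultimately show ?thesis
    using r_trivial_on_G_orbit by (simp add: L_def[abs_def])
qed

end
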